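(* Let $D$ be a tournament missing disjoint paths of length 2 and let $C=a_1b_1c_1,\dots,a_kb_kc_k$ be a double cycle in $\Delta(D)$. For each $i\in\{1,\dots,k\}$ choose $\{x_i,y_i\}=\{a_i,b_i\}$ or $\{x_i,y_i\}=\{b_i,c_i\}$ (with either labelling). Then for all $j\in\{1,\dots,k\}$ and all $i\neq j$: (1) $x_j\to x_i$ if and only if $y_i\to x_j$; (2) $x_j\to y_i$ if and only if $x_i\to x_j$; (3) $y_j\to x_i$ if and only if $y_i\to y_j$; (4) $y_j\to y_i$ if and only if $x_i\to y_j$.
   Context: All digraphs are finite oriented graphs. $N^+(v)$ is the out-neighborhood; $N^{++}(v)$ is the set of vertices $w\notin N^+(v)\cup\{v\}$ with $u\to w$ for some $u\in N^+(v)$. A missing edge is a pair of distinct non-adjacent vertices; the missing graph is formed by the missing edges. $D$ is a tournament missing disjoint paths of length 2 if its missing graph is a vertex-disjoint union of paths each with exactly two edges. For missing edges $\{x,y\},\{a,b\}$, $\{x,y\}$ loses to $\{a,b\}$ (written $xy\to ab$) if the endpoints can be labelled so that $x\to a$, $b\notin N^+(x)\cup N^{++}(x)$, $y\to b$, $a\notin N^+(y)\cup N^{++}(y)$. $\Delta(D)$ has the missing edges as vertices and arcs $(e,e')$ whenever $e$ loses to $e'$. For missing paths $abc$, $xyz$ (edges $ab,bc$ and $xy,yz$), $abc\to xyz$ means each of $ab,bc$ loses to each of $xy,yz$. A double cycle is a sequence $C=a_1b_1c_1,\dots,a_kb_kc_k$ ($k\ge2$) of distinct missing paths of length 2 (components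 of the missing graph) with $a_ib_ic_i\to a_{i+1}b_{i+1}c_{i+1}$ for all $i$, indices modulo $k$. *)

theory Defs
  imports Main
begin

definition oriented_graph :: "'a set \<Rightarrow> ('a \<Rightarrow> 'a \<Rightarrow> bool) \<Rightarrow> bool" where
  "oriented_graph V A \<longleftrightarrow> finite V \<and> (\<forall>u v. A u v \<longrightarrow> u \<in> V \<and> v \<in> V)
     \<and> (\<forall>v. \<not> A v v) \<and> (\<forall>u v. A u v \<longrightarrow> \<not> A v u)"

definition out_nbhd :: "'a set \<Rightarrow> ('a \<Rightarrow> 'a \<Rightarrow> bool) \<Rightarrow> 'a \<Rightarrow> 'a set" where
  "out_nbhd V A v = {w \<in> V. A v w}"

definition second_out_nbhd :: "'a set \<Rightarrow> ('a \<Rightarrow> 'a \<Rightarrow> bool) \<Rightarrow> 'a \<Rightarrow> 'a set" where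
  "second_out_nbhd V A v =
     {w \<in> V. w \<notin> out_nbhd V A v \<and> w \<noteq> v \<and> (\<exists>u \<in> out_nbhd V A v. A u w)}"

definition missing :: "'a set \<Rightarrow> ('a \<Rightarrow> 'a \<Rightarrow> bool) \<Rightarrow> 'a \<Rightarrow> 'a \<Rightarrow> bool" where
  "missing V A x y \<longleftrightarrow> x \<in> V \<and> y \<in> V \<and> x \<noteq> y \<and> \<not> A x y \<and> \<not> A y x"

text \<open>a b c is a component of the missing graph which is a path with edges ab, bc.\<close>
definition missing_path :: "'a set \<Rightarrow> ('a \<Rightarrow> 'a \<Rightarrow> bool) \<Rightarrow> 'a \<Rightarrow> 'a \<Rightarrow> 'a \<Rightarrow> bool" where
  "missing_path V A a b c \<longleftrightarrow> missing V A a b \<and> missing V A b c \<and> a \<noteq> c \<and> \<not> missing V A a c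
     \<and> (\<forall>z. missing V A a z \<longrightarrow> z = b) \<and> (\<forall>z. missing V A c z \<longrightarrow> z = b)
     \<and> (\<forall>z. missing V A b z \<longrightarrow> z = a \<or> z = c)"

definition tournament_missing_P2 :: "'a set \<Rightarrow> ('a \<Rightarrow> 'a \<Rightarrow> bool) \<Rightarrow> bool" where
  "tournament_missing_P2 V A \<longleftrightarrow> oriented_graph V A \<and>
     (\<forall>x y. missing V A x y \<longrightarrow> (\<exists>a b c. missing_path V A a b c \<and> {x, y} \<subseteq> {a, b, c}))"

text \<open>Missing edge e loses to missing edge e' (vertices of Delta(D) and its arcs).\<close>
definition loses :: "'a set \<Rightarrow> ('a \<Rightarrow> 'a \<Rightarrow> bool) \<Rightarrow> 'a set \<Rightarrow> 'a set \<Rightarrow> bool" where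
  "loses V A e e' \<longleftrightarrow> (\<exists>x y a b. e = {x, y} \<and> e' = {a, b} \<and> missing V A x y \<and> missing V A a b
     \<and> A x a \<and> b \<notin> out_nbhd V A x \<union> second_out_nbhd V A x
     \<and> A y b \<and> a \<notin> out_nbhd V A y \<union> second_out_nbhd V A y)"

definition path_loses :: "'a set \<Rightarrow> ('a \<Rightarrow> 'a \<Rightarrow> bool) \<Rightarrow> 'a \<times> 'a \<times> 'a \<Rightarrow> 'a \<times> 'a \<times> 'a \<Rightarrow> bool" where
  "path_loses V A p q \<longleftrightarrow> (case p of (a, b, c) \<Rightarrow> case q of (x, y, z) \<Rightarrow>
     (\<forall>e \<in> {{a, b}, {b, c}}. \<forall>e' \<in> {{x, y}, {y, z}}. loses V A e e'))"

text \<open>Double cycle a_0 b_0 c_0, ..., a_{k-1} b_{k-1} c_{k-1} (0-indexed, indices mod k).\<close>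
definition double_cycle :: "'a set \<Rightarrow> ('a \<Rightarrow> 'a \<Rightarrow> bool) \<Rightarrow> nat \<Rightarrow> (nat \<Rightarrow> 'a) \<Rightarrow> (nat \<Rightarrow> 'a) \<Rightarrow> (nat \<Rightarrow> 'a) \<Rightarrow> bool" where
  "double_cycle V A k a b c \<longleftrightarrow> 2 \<le> k
     \<and> (\<forall>i < k. missing_path V A (a i) (b i) (c i))
     \<and> (\<forall>i < k. \<forall>j < k. i \<noteq> j \<longrightarrow> {a i, b i, c i} \<noteq> {a j, b j, c j})
     \<and> (\<forall>i < k. path_loses V A (a i, b i, c i) (a ((i + 1) mod k), b ((i + 1) mod k), c ((i + 1) mod k)))"

end

theory Submission
  imports Defs
begin

text \<open>Each pair of consecutive missing edges \<open>xy \<rightarrow> pq\<close> of the double cycle spans a directed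
  4-cycle \<open>x \<rightarrow> p \<rightarrow> y \<rightarrow> q \<rightarrow> x\<close>, and the second-neighbourhood condition forbids
  \<open>x \<rightarrow> z \<rightarrow> q\<close> and \<open>y \<rightarrow> z \<rightarrow> p\<close>. Hence if a vertex \<open>z\<close> outside the two components is
  beaten by both ends of \<open>xy\<close>, it is beaten by both ends of \<open>pq\<close>, and if it beats both ends
  of \<open>pq\<close>, it beats both ends of \<open>xy\<close>. Walking around the cycle, a vertex \<open>z\<close> of component
  \<open>j\<close> beaten by both ends of an edge of another component would be beaten by both ends of an
  edge of component \<open>j - 1\<close>; but the 4-cycles show that every vertex of one component beats
  exactly one end of each missing edge of a neighbouring component. The same holds backwards
  for a vertex beating both ends. So \<open>z\<close> beats exactly one end of each missing edge of every
  other component.\<close>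

lemma cyclic_induct:
  fixes k s t :: nat
  assumes "s < k" "t < k" "P s"
    and step: "\<And>m. m < k \<Longrightarrow> P m \<Longrightarrow> m \<noteq> t \<Longrightarrow> P (Suc m mod k)"
  shows "P t"
proof -
  have "(s + (t + k - s)) mod k = t"
    using assms(1,2) by simp
  then obtain d where d: "(s + d) mod k = t" "\<forall>n<d. (s + n) mod k \<noteq> t"
    using exists_least_iff[of "\<lambda>d. (s + d) mod k = t"] by blast
  have "P ((s + n) mod k)" if "n \<le> d" for n
    using that
  proof (induction n)
    case 0
    then show ?case using assms(1,3) by simp
  next
    case (Suc n)
    then have "P ((s + n) mod k)" "(s + n) mod k \<noteq> t"
      using d(2) by auto
    moreover have "(s + n) mod k < k"
      using assms(1) by simp
    ultimately have "P (Suc ((s + n) mod k) mod k)"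
      using step by blast
    then show ?case by (simp add: mod_Suc_eq)
  qed
  then show ?thesis using d(1) by blast
qed

lemma oriented_graph_asym: "oriented_graph V A \<Longrightarrow> A u v \<Longrightarrow> \<not> A v u"
  unfolding oriented_graph_def by blast

lemma oriented_graph_arc_in: "oriented_graph V A \<Longrightarrow> A u v \<Longrightarrow> u \<in> V \<and> v \<in> V"
  unfolding oriented_graph_def by blast

lemma outside_two_step_nbhd:
  assumes "oriented_graph V A" "w \<in> V" "w \<noteq> v"
    and "w \<notin> out_nbhd V A v \<union> second_out_nbhd V A v"
    and "A v u"
  shows "\<not> A u w"
  using assms oriented_graph_arc_in[OF assms(1)]
  unfolding out_nbhd_def second_out_nbhd_def by blast

definition splits :: "('a \<Rightarrow> 'a \<Rightarrow> bool) \<Rightarrow> 'a \<Rightarrow> 'a set \<Rightarrow> bool" where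
  "splits A z e \<longleftrightarrow> (\<exists>u\<in>e. A u z) \<and> (\<exists>w\<in>e. A z w)"

lemma splits_pair_iff:
  assumes "oriented_graph V A" "splits A z {u, w}"
  shows "A z u \<longleftrightarrow> A w z"
  using assms oriented_graph_asym[OF assms(1)] unfolding splits_def by blast

lemma loses_four_cycle:
  assumes og: "oriented_graph V A" and "loses V A e e'"
    and adj: "\<forall>u\<in>e. \<forall>v\<in>e'. A u v \<or> A v u"
  obtains x y p q where "e = {x, y}" "e' = {p, q}" "A x p" "A p y" "A y q" "A q x"
    "\<And>z. A x z \<Longrightarrow> \<not> A z q" "\<And>z. A y z \<Longrightarrow> \<not> A z p"
proof -
  obtain x y p q where e: "e = {x, y}" "e' = {p, q}" and "missing V A p q"
    and xp: "A x p" and q: "q \<notin> out_nbhd V A x \<union> second_out_nbhd V A x"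
    and yq: "A y q" and p: "p \<notin> out_nbhd V A y \<union> second_out_nbhd V A y"
    using assms(2) unfolding loses_def by blast
  then have "p \<in> V" "q \<in> V"
    unfolding missing_def by blast+
  have "\<not> A x q" "\<not> A y p"
    using q p \<open>p \<in> V\<close> \<open>q \<in> V\<close> unfolding out_nbhd_def by blast+
  then have qx: "A q x" and py: "A p y"
    using adj e by blast+
  then have "q \<noteq> x" "p \<noteq> y"
    using og unfolding oriented_graph_def by blast+
  then have "\<And>z. A x z \<Longrightarrow> \<not> A z q" "\<And>z. A y z \<Longrightarrow> \<not> A z p"
    using outside_two_step_nbhd[OF og] q p \<open>p \<in> V\<close> \<open>q \<in> V\<close> by blast+
  then show ?thesis
    using that e xp py yq qx by blast
qed

lemma loses_splits:
  assumes "oriented_graph V A" "loses V A e e'" "\<forall>u\<in>e. \<forall>v\<in>e'. A u v \<or> A v u"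
  shows "v \<in> e' \<Longrightarrow> splits A v e" and "u \<in> e \<Longrightarrow> splits A u e'"
  by (rule loses_four_cycle[OF assms], auto simp: splits_def)+

lemma loses_propagate_beaten:
  assumes "oriented_graph V A" "loses V A e e'" "\<forall>u\<in>e. \<forall>v\<in>e'. A u v \<or> A v u"
    and "\<forall>u\<in>e. A u z" "\<forall>v\<in>e'. A v z \<or> A z v"
  shows "\<forall>v\<in>e'. A v z"
  by (rule loses_four_cycle[OF assms(1-3)]) (use assms(4,5) in blast)

lemma loses_propagate_beating:
  assumes "oriented_graph V A" "loses V A e e'" "\<forall>u\<in>e. \<forall>v\<in>e'. A u v \<or> A v u"
    and "\<forall>v\<in>e'. A z v" "\<forall>u\<in>e. A u z \<or> A z u"
  shows "\<forall>u\<in>e. A z u"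
  by (rule loses_four_cycle[OF assms(1-3)]) (use assms(4,5) in blast)

definition missing_ball :: "'a set \<Rightarrow> ('a \<Rightarrow> 'a \<Rightarrow> bool) \<Rightarrow> 'a \<Rightarrow> 'a set" where
  "missing_ball V A v =
     {w. w = v \<or> missing V A v w \<or> (\<exists>u. missing V A v u \<and> missing V A u w)}"

lemma missing_sym: "missing V A u v \<Longrightarrow> missing V A v u"
  unfolding missing_def by auto

lemma missing_path_eq_missing_ball:
  assumes "missing_path V A a b c" "v \<in> {a, b, c}"
  shows "{a, b, c} = missing_ball V A v"
proof -
  have "\<And>z. missing V A a z \<longleftrightarrow> z = b" "\<And>z. missing V A c z \<longleftrightarrow> z = b"
    "\<And>z. missing V A b z \<longleftrightarrow> z = a \<or> z = c" "a \<noteq> c"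
    using assms(1) unfolding missing_path_def by (blast intro: missing_sym)+
  then show ?thesis
    using assms(2) unfolding missing_ball_def by auto
qed

text \<open>Only orientedness is assumed: the structure of the missing graph that is needed is
  already part of \<open>double_cycle\<close>.\<close>

locale double_cycle_graph =
  fixes V :: "'a set" and A :: "'a \<Rightarrow> 'a \<Rightarrow> bool" and k :: nat and a b c :: "nat \<Rightarrow> 'a"
  assumes oriented: "oriented_graph V A"
    and double_cycle: "double_cycle V A k a b c"
begin

definition component :: "nat \<Rightarrow> 'a set" where
  "component m = {a m, b m, c m}"

definition path_edges :: "nat \<Rightarrow> 'a set set" where
  "path_edges m = {{a m, b m}, {b m, c m}}"

lemma two_le_k: "2 \<le> k"
  using double_cycle unfolding double_cycle_def by blast

lemma missing_path: "m < k \<Longrightarrow> missing_path V A (a m) (b m) (c m)"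
  using double_cycle unfolding double_cycle_def by blast

lemma Suc_mod_neq: "m < k \<Longrightarrow> Suc m mod k \<noteq> m"
  using two_le_k by (simp add: mod_Suc)

lemma ab_in_path_edges: "{a m, b m} \<in> path_edges m"
  unfolding path_edges_def by simp

lemma path_edge_subset: "e \<in> path_edges m \<Longrightarrow> e \<subseteq> component m"
  unfolding path_edges_def component_def by auto

lemma component_covered: "v \<in> component m \<Longrightarrow> \<exists>e\<in>path_edges m. v \<in> e"
  unfolding path_edges_def component_def by auto

lemma component_disjoint:
  assumes "m < k" "n < k" "v \<in> component m" "v \<in> component n"
  shows "m = n"
proof -
  have "component m = component n"
    using missing_path_eq_missing_ball[OF missing_path] assms unfolding component_def by metis
  then show ?thesis
    using double_cycle assms(1,2) unfolding double_cycle_def component_def by blast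
qed

lemma components_adjacent:
  assumes "m < k" "n < k" "m \<noteq> n" "u \<in> component m" "v \<in> component n"
  shows "A u v \<or> A v u"
proof -
  have "u \<noteq> v"
    using assms component_disjoint by blast
  moreover have "\<not> missing V A u v"
  proof
    assume "missing V A u v"
    then have "v \<in> component m"
      using missing_path_eq_missing_ball[OF missing_path[OF assms(1)]] assms(4)
      unfolding missing_ball_def component_def by blast
    then show False
      using assms component_disjoint by blast
  qed
  moreover have "u \<in> V" "v \<in> V"
    using missing_path assms(1,2,4,5)
    unfolding component_def missing_path_def missing_def by blast+
  ultimately show ?thesis
    unfolding missing_def by blast
qed

lemma consecutive_loses:
  assumes "m < k" "e \<in> path_edges m" "e' \<in> path_edges (Suc m mod k)"
  shows "loses V A e e'" and "\<forall>u\<in>e. \<forall>v\<in>e'. A u v \<or> A v u"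
proof -
  show "loses V A e e'"
    using double_cycle assms unfolding double_cycle_def path_loses_def path_edges_def by auto
  show "\<forall>u\<in>e. \<forall>v\<in>e'. A u v \<or> A v u"
    using components_adjacent[OF assms(1) _ Suc_mod_neq[OF assms(1), symmetric]]
      path_edge_subset assms two_le_k by fastforce
qed

lemma not_beaten_by_path_edge:
  assumes "i < k" "j < k" "i \<noteq> j" "z \<in> component j" "e \<in> path_edges i"
  shows "\<not> (\<forall>u\<in>e. A u z)"
proof
  assume "\<forall>u\<in>e. A u z"
  define P where "P m \<longleftrightarrow> m \<noteq> j \<and> (\<exists>e\<in>path_edges m. \<forall>u\<in>e. A u z)" for m
  have "P j"
  proof (rule cyclic_induct[of i k j P])
    show "P i" using assms \<open>\<forall>u\<in>e. A u z\<close> unfolding P_def by blast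
  next
    fix m assume m: "m < k" "P m"
    then obtain d where d: "d \<in> path_edges m" "\<forall>u\<in>d. A u z"
      unfolding P_def by blast
    let ?n = "Suc m mod k"
    show "P ?n"
    proof (cases "?n = j")
      case True
      then obtain d' where "d' \<in> path_edges ?n" "z \<in> d'"
        using component_covered assms(4) by blast
      then have "splits A z d"
        using loses_splits(1)[OF oriented consecutive_loses[OF m(1) d(1)]] by blast
      then show ?thesis
        using d(2) oriented_graph_asym[OF oriented] unfolding splits_def by blast
    next
      case False
      have "?n < k" using m(1) by simp
      then have "\<forall>v\<in>{a ?n, b ?n}. A v z \<or> A z v"
        using components_adjacent[OF _ assms(2) False] assms(4) unfolding component_def by blast
      then have "\<forall>v\<in>{a ?n, b ?n}. A v z"
        using loses_propagate_beaten[OF oriented consecutive_loses[OF m(1) d(1) ab_in_path_edges]]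
          d(2) by blast
      then show ?thesis
        using False ab_in_path_edges unfolding P_def by blast
    qed
  qed (use assms in auto)
  then show False
    unfolding P_def by blast
qed

lemma not_beating_path_edge:
  assumes "i < k" "j < k" "i \<noteq> j" "z \<in> component j" "e \<in> path_edges i"
  shows "\<not> (\<forall>u\<in>e. A z u)"
proof -
  define P where "P m \<longleftrightarrow> m \<noteq> j \<longrightarrow> \<not> (\<exists>e\<in>path_edges m. \<forall>u\<in>e. A z u)" for m
  have "P i"
  proof (rule cyclic_induct[of j k i P])
    fix m assume m: "m < k" "P m"
    let ?n = "Suc m mod k"
    show "P ?n"
    proof (rule ccontr)
      assume "\<not> P ?n"
      then obtain d' where d': "d' \<in> path_edges ?n" "\<forall>u\<in>d'. A z u"
        unfolding P_def by blast
      show False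
      proof (cases "m = j")
        case True
        then obtain d where "d \<in> path_edges m" "z \<in> d"
          using component_covered assms(4) by blast
        then have "splits A z d'"
          using loses_splits(2)[OF oriented consecutive_loses[OF m(1) _ d'(1)]] by blast
        then show False
          using d'(2) oriented_graph_asym[OF oriented] unfolding splits_def by blast
      next
        case False
        then have "\<forall>u\<in>{a m, b m}. A u z \<or> A z u"
          using components_adjacent[OF m(1) assms(2) False] assms(4) unfolding component_def by blast
        then have "\<forall>u\<in>{a m, b m}. A z u"
          using loses_propagate_beating[OF oriented consecutive_loses[OF m(1) ab_in_path_edges d'(1)]]
            d'(2) by blast
        then show False
          using m(2) False ab_in_path_edges unfolding P_def by blast
      qed
    qed
  qed (use assms in \<open>auto simp: P_def\<close>)
  then show ?thesis
    using assms(3,5) unfolding P_def by blast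
qed

lemma splits_path_edge:
  assumes "i < k" "j < k" "i \<noteq> j" "z \<in> component j" "e \<in> path_edges i"
  shows "splits A z e"
  using not_beaten_by_path_edge[OF assms] not_beating_path_edge[OF assms]
    components_adjacent[OF assms(2,1) assms(3)[symmetric] assms(4)] path_edge_subset[OF assms(5)]
  unfolding splits_def by blast

end

theorem corollary4p7:
  fixes V :: "'a set" and A :: "'a \<Rightarrow> 'a \<Rightarrow> bool" and k :: nat
    and a b c x y :: "nat \<Rightarrow> 'a"
  assumes "tournament_missing_P2 V A"
    and "double_cycle V A k a b c"
    and "\<forall>i < k. {x i, y i} = {a i, b i} \<or> {x i, y i} = {b i, c i}"
    and "j < k" and "i < k" and "i \<noteq> j"
  shows "(A (x j) (x i) \<longleftrightarrow> A (y i) (x j))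
       \<and> (A (x j) (y i) \<longleftrightarrow> A (x i) (x j))
       \<and> (A (y j) (x i) \<longleftrightarrow> A (y i) (y j))
       \<and> (A (y j) (y i) \<longleftrightarrow> A (x i) (y j))"
proof -
  have oriented: "oriented_graph V A"
    using assms(1) unfolding tournament_missing_P2_def by blast
  interpret double_cycle_graph V A k a b c
    using oriented assms(2) by unfold_locales
  have xy_j: "x j \<in> component j" "y j \<in> component j"
    using assms(3,4) unfolding component_def by (auto simp: doubleton_eq_iff)
  have xy_i: "{x i, y i} \<in> path_edges i" "{y i, x i} \<in> path_edges i"
    using assms(3,5) unfolding path_edges_def by (auto simp: insert_commute)
  show ?thesis
    using splits_pair_iff[OF oriented splits_path_edge[OF assms(5,4,6) xy_j(1) xy_i(1)]]
      splits_pair_iff[OF oriented splits_path_edge[OF assms(5,4,6) xy_j(1) xy_i(2)]]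
      splits_pair_iff[OF oriented splits_path_edge[OF assms(5,4,6) xy_j(2) xy_i(1)]]
      splits_pair_iff[OF oriented splits_path_edge[OF assms(5,4,6) xy_j(2) xy_i(2)]]
    by blast
qed

end
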